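(* Let $\mathcal{D}$ be an abstract system of proof notations and $s\in\mathbb{N}$. If $\mathcal{D}$ is $s$-bounded, $d\in\mathbb{E}(\mathcal{D})$ and $d\to d'$ (in $\mathbb{E}(\mathcal{D})$), then $\vartheta_d(s)\ge\vartheta_{d'}(s)$.
   Context: An abstract system of proof notations is a set $\mathcal{D}$ with functions $|\cdot|,o(\cdot)\colon\mathcal{D}\to\mathbb{N}\setminus\{0\}$ (size and height) and a relation $\to\subseteq\mathcal{D}\times\mathcal{D}$ such that $d\to d'$ implies $o(d')<o(d)$. The cut-elimination closure $\mathbb{E}(\mathcal{D})$ is the abstract system of formal terms inductively generated by: every $d\in\mathcal{D}$ is in $\mathbb{E}(\mathcal{D})$ (with size and height inherited); if $d,e\in\mathbb{E}(\mathcal{D})$ then $\mathsf{I}d,\ \mathsf{R}de,\ \mathsf{E}d\in\mathbb{E}(\mathcal{D})$ ($\mathsf I,\mathsf R,\mathsf E$ new symbols), with $|\mathsf Id|=|d|+1$, $|\mathsf Rde|=|d|+|e|+1$, $|\mathsf Ed|=|d|+1$, $o(\mathsf Id)=o(d)$, $o(\mathsf Rde)=o(d)+o(e)$, $o(\mathsf Ed)=2^{o(d)}-1$. The relation $\to$ on $\mathbb{E}(\mathcal{D})$ is inductively generated by: $d\to d'$ in $\mathcal{D}$ implies $d\to d'$; $d\to d'$ implies $\mathsf Id\to\mathsf Id'$; $e\to e'$ implies $\mathsf Rde\to\mathsf Rde'$; $d\to d'$ implies $\mathsf Ed\to\mathsf Ed'$; $\mathsf Rde\to\mathsf Id$ always;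 and $d\to d'$ together with $d\to d''$ implies $\mathsf Ed\to\mathsf R(\mathsf Ed')(\mathsf Ed'')$. The size function $\vartheta_d\colon\mathbb{N}\to\mathbb{N}$ for $d\in\mathbb{E}(\mathcal{D})$ is defined by recursion: $\vartheta_d(s)=s$ for $d\in\mathcal{D}$; $\vartheta_{\mathsf Id}(s)=\vartheta_d(s)+1$; $\vartheta_{\mathsf Rde}(s)=\max\{|d|+1+\vartheta_e(s),\ \vartheta_d(s)+1\}$; $\vartheta_{\mathsf Ed}(s)=o(d)\cdot(\vartheta_d(s)+2)$. $\mathcal{D}$ is called $s$-bounded if $|d|\le s$ for all $d\in\mathcal{D}$. *)

theory Defs
  imports Main
begin

definition proof_notation_system ::
  "'a set \<Rightarrow> ('a \<Rightarrow> nat) \<Rightarrow> ('a \<Rightarrow> nat) \<Rightarrow> ('a \<Rightarrow> 'a \<Rightarrow> bool) \<Rightarrow> bool" where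
  "proof_notation_system D sz ht red \<longleftrightarrow>
     (\<forall>d\<in>D. sz d \<ge> 1 \<and> ht d \<ge> 1) \<and>
     (\<forall>d\<in>D. \<forall>d'\<in>D. red d d' \<longrightarrow> ht d' < ht d)"

definition s_bounded :: "'a set \<Rightarrow> ('a \<Rightarrow> nat) \<Rightarrow> nat \<Rightarrow> bool" where
  "s_bounded D sz s \<longleftrightarrow> (\<forall>d\<in>D. sz d \<le> s)"

datatype 'a eterm = Base 'a | Iop "'a eterm" | Rop "'a eterm" "'a eterm" | Eop "'a eterm"

fun inE :: "'a set \<Rightarrow> 'a eterm \<Rightarrow> bool" where
  "inE D (Base d) = (d \<in> D)"
| "inE D (Iop d) = inE D d"
| "inE D (Rop d e) = (inE D d \<and> inE D e)"
| "inE D (Eop d) = inE D d"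

fun esize :: "('a \<Rightarrow> nat) \<Rightarrow> 'a eterm \<Rightarrow> nat" where
  "esize sz (Base d) = sz d"
| "esize sz (Iop d) = esize sz d + 1"
| "esize sz (Rop d e) = esize sz d + esize sz e + 1"
| "esize sz (Eop d) = esize sz d + 1"

fun eheight :: "('a \<Rightarrow> nat) \<Rightarrow> 'a eterm \<Rightarrow> nat" where
  "eheight ht (Base d) = ht d"
| "eheight ht (Iop d) = eheight ht d"
| "eheight ht (Rop d e) = eheight ht d + eheight ht e"
| "eheight ht (Eop d) = 2 ^ eheight ht d - 1"

inductive ered :: "'a set \<Rightarrow> ('a \<Rightarrow> 'a \<Rightarrow> bool) \<Rightarrow> 'a eterm \<Rightarrow> 'a eterm \<Rightarrow> bool"
  for D red where
  base: "d \<in> D \<Longrightarrow> d' \<in> D \<Longrightarrow> red d d' \<Longrightarrow> ered D red (Base d) (Base d')"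
| iI: "ered D red d d' \<Longrightarrow> ered D red (Iop d) (Iop d')"
| rR: "ered D red e e' \<Longrightarrow> ered D red (Rop d e) (Rop d e')"
| eE: "ered D red d d' \<Longrightarrow> ered D red (Eop d) (Eop d')"
| rI: "ered D red (Rop d e) (Iop d)"
| eR: "ered D red d d' \<Longrightarrow> ered D red d d'' \<Longrightarrow> ered D red (Eop d) (Rop (Eop d') (Eop d''))"

fun theta :: "('a \<Rightarrow> nat) \<Rightarrow> ('a \<Rightarrow> nat) \<Rightarrow> 'a eterm \<Rightarrow> nat \<Rightarrow> nat" where
  "theta sz ht (Base d) s = s"
| "theta sz ht (Iop d) s = theta sz ht d s + 1"
| "theta sz ht (Rop d e) s = max (esize sz d + 1 + theta sz ht e s) (theta sz ht d s + 1)"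
| "theta sz ht (Eop d) s = eheight ht d * (theta sz ht d s + 2)"

end

theory Submission
  imports Defs
begin

text \<open>Reductions strictly lower the height and \<open>\<vartheta>\<close> bounds the size, so in the critical
  case \<open>E d \<rightarrow> R (E d') (E d'')\<close> both summands of \<open>\<vartheta>\<close> on the right are at most
  \<open>(o(d) - 1) \<cdot> (\<vartheta>\<^sub>d(s) + 2) + \<vartheta>\<^sub>d(s) + 2 = \<vartheta>\<^sub>E\<^sub>d(s)\<close>.\<close>

lemma ered_preserves_inE: "ered D red d d' \<Longrightarrow> inE D d \<Longrightarrow> inE D d'"
  by (induction rule: ered.induct) auto

lemma eheight_pos:
  assumes "proof_notation_system D sz ht red" and "inE D d"
  shows "eheight ht d \<ge> 1"
  using assms(2)
proof (induction d)
  case (Eop d)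
  then have "(2::nat) ^ 1 \<le> 2 ^ eheight ht d"
    by (intro power_increasing) simp_all
  then show ?case by simp
qed (use assms(1) in \<open>auto simp: proof_notation_system_def\<close>)

lemma two_power_add_le: "a < n \<Longrightarrow> b < n \<Longrightarrow> (2::nat) ^ a + 2 ^ b \<le> 2 ^ n"
proof -
  assume "a < n" "b < n"
  then have "(2::nat) ^ a \<le> 2 ^ (n - 1)" "(2::nat) ^ b \<le> 2 ^ (n - 1)"
    by (simp_all add: power_increasing)
  moreover have "(2::nat) ^ n = 2 * 2 ^ (n - 1)"
    using \<open>a < n\<close> by (cases n) simp_all
  ultimately show ?thesis by linarith
qed

lemma eheight_ered_less:
  assumes "ered D red d d'" and "proof_notation_system D sz ht red" and "inE D d"
  shows "eheight ht d' < eheight ht d"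
  using assms(1,3)
proof (induction rule: ered.induct)
  case (base d d')
  then show ?case using assms(2) by (simp add: proof_notation_system_def)
next
  case (eE d d')
  then have "(2::nat) ^ eheight ht d' < 2 ^ eheight ht d" by simp
  then show ?case by (simp add: less_diff_iff)
next
  case (rI d e)
  then show ?case using eheight_pos[OF assms(2), of e] by simp
next
  case (eR d d' d'')
  then have "(2::nat) ^ eheight ht d' + 2 ^ eheight ht d'' \<le> 2 ^ eheight ht d"
    by (intro two_power_add_le) simp_all
  moreover have "(1::nat) \<le> 2 ^ eheight ht d'" "(1::nat) \<le> 2 ^ eheight ht d''" by simp_all
  ultimately show ?case by (simp only: eheight.simps)
qed simp_all

lemma esize_le_theta:
  assumes "proof_notation_system D sz ht red" and "s_bounded D sz s" and "inE D d"
  shows "esize sz d \<le> theta sz ht d s"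
  using assms(3)
proof (induction d)
  case (Eop d)
  then have "esize sz d + 1 \<le> 1 * (theta sz ht d s + 2)" by simp
  also have "\<dots> \<le> eheight ht d * (theta sz ht d s + 2)"
    using eheight_pos[OF assms(1)] Eop.prems by (intro mult_le_mono1) simp
  finally show ?case by simp
qed (use assms(2) in \<open>auto simp: s_bounded_def\<close>)

lemma theta_Eop_ge_Rop:
  assumes "(z::nat) \<le> t'" and "h' < h" and "h'' < h" and "t' \<le> t" and "t'' \<le> t"
  shows "max (z + 1 + 1 + h'' * (t'' + 2)) (h' * (t' + 2) + 1) \<le> h * (t + 2)"
proof -
  have "h' * (t' + 2) \<le> (h - 1) * (t + 2)" "h'' * (t'' + 2) \<le> (h - 1) * (t + 2)"
    using assms by (intro mult_le_mono; simp)+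
  moreover have "h * (t + 2) = (h - 1) * (t + 2) + (t + 2)"
    using assms(2) by (cases h) simp_all
  ultimately show ?thesis using assms(1,4) by simp
qed

theorem mainTheorem5:
  fixes D :: "'a set" and sz ht :: "'a \<Rightarrow> nat" and red :: "'a \<Rightarrow> 'a \<Rightarrow> bool"
    and s :: nat and d d' :: "'a eterm"
  assumes "proof_notation_system D sz ht red"
    and "s_bounded D sz s"
    and "inE D d"
    and "ered D red d d'"
  shows "theta sz ht d s \<ge> theta sz ht d' s"
  using assms(4,3)
proof (induction rule: ered.induct)
  case (eE d d')
  then have "eheight ht d' \<le> eheight ht d"
    using eheight_ered_less[OF _ assms(1)] by fastforce
  with eE show ?case by (simp only: theta.simps) (intro mult_le_mono; simp)
next
  case (eR d d' d'')
  have "inE D d" using eR.prems by simp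
  with eR.IH have IH: "theta sz ht d' s \<le> theta sz ht d s" "theta sz ht d'' s \<le> theta sz ht d s"
    by blast+
  have "inE D d'" using eR.hyps(1) \<open>inE D d\<close> by (rule ered_preserves_inE)
  then have "esize sz d' \<le> theta sz ht d' s" by (rule esize_le_theta[OF assms(1,2)])
  moreover have "eheight ht d' < eheight ht d" "eheight ht d'' < eheight ht d"
    using eR.hyps \<open>inE D d\<close> eheight_ered_less[OF _ assms(1)] by blast+
  ultimately show ?case
    unfolding theta.simps esize.simps using IH by (rule theta_Eop_ge_Rop)
qed auto

end
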